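(* Let $k \geq 2$ and $n \geq 1$ be integers and $\Sigma_k = \{0,\ldots,k-1\}$. Suppose $w$ is a word over $\Sigma_k$ that contains every square in $\Sigma_k^{2n}$ as a factor. Then $|w| \geq k^n + n\,C(n,k) \geq 2k^n$.
   Context: A word is a square if it equals $xx$ for some word $x$; the squares in $\Sigma_k^{2n}$ are exactly the words $xx$ with $x \in \Sigma_k^n$. Two words $u,v \in \Sigma_k^n$ are conjugate if $u = ab$ and $v = ba$ for some words $a,b$. $C(n,k)$ denotes the number of conjugacy classes in $\Sigma_k^n$, i.e. $C(n,k) = \sum_{d \mid n} \frac{\phi(d)}{n} k^{n/d}$ with $\phi$ Euler's totient function. A factor of a word is a contiguous block of consecutive symbols. *)

theory Defs
  imports "HOL-Number_Theory.Number_Theory" "HOL-Library.Sublist"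
begin

definition words :: "nat \<Rightarrow> nat \<Rightarrow> nat list set" where
  "words k n = {x. length x = n \<and> set x \<subseteq> {..<k}}"

text \<open>C(n,k): number of conjugacy classes in Sigma_k^n (necklace count).\<close>
definition C :: "nat \<Rightarrow> nat \<Rightarrow> real" where
  "C n k = (\<Sum>d | d dvd n. real (totient d) / real n * real k ^ (n div d))"

end

theory Submission
  imports Defs
begin

text \<open>Scan the occurrences of squares of half-length \<open>n\<close> in \<open>w\<close>. They fall into maximal runs of
  consecutive starting positions, along which the root advances by one rotation; so all roots of a
  run are conjugate, and a run ending at \<open>e\<close> is followed by \<open>n\<close> positions at which no square starts.
  Hence \<open>|w|\<close> is at least the number of square positions, which is \<open>\<ge> k\<^sup>n\<close>, plus \<open>n\<close> times the
  number of runs. A conjugacy class with stabiliser \<open>s\<close> has \<open>n/s\<close> members, so the number of runs is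
  at least \<open>1/n\<close> times the sum of all stabiliser sizes; by Burnside this sum is
  \<open>\<Sum>\<^sub>r k\<^bsup>gcd(r,n)\<^esup> = n C(n,k)\<close>.\<close>

lemma words_eq_lists: "words k n = {xs. set xs \<subseteq> {..<k} \<and> length xs = n}"
  by (auto simp: words_def)

lemma card_words: "card (words k n) = k ^ n"
  by (simp add: words_eq_lists card_lists_length_eq)

lemma finite_words: "finite (words k n)"
  by (simp add: words_eq_lists finite_lists_length_eq)


section \<open>Rotations\<close>

lemma inj_rotate: "inj (rotate n)"
  by (simp add: rotate_def inj_rotate1)

lemma rotate_rotate_inverse: "rotate (length xs - j mod length xs) (rotate j xs) = xs"
proof (cases "xs = []")
  case False
  define L where "L = length xs"
  have "L > 0" using False by (simp add: L_def)
  hence "L - j mod L + j = L * (j div L + 1)"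
    using mult_div_mod_eq[of L j] mod_less_divisor[of L j] unfolding distrib_left by linarith
  thus ?thesis by (simp add: rotate_rotate L_def[symmetric])
qed simp

definition rotation_stabilizer :: "'a list \<Rightarrow> nat set" where
  "rotation_stabilizer xs = {r. r < length xs \<and> rotate r xs = xs}"

lemma rotation_stabilizer_rotate: "rotation_stabilizer (rotate j xs) = rotation_stabilizer xs"
proof -
  have "rotate r (rotate j xs) = rotate j (rotate r xs)" for r
    by (simp add: rotate_rotate add.commute)
  hence "rotate r (rotate j xs) = rotate j xs \<longleftrightarrow> rotate r xs = xs" for r
    by (simp add: inj_eq[OF inj_rotate])
  thus ?thesis by (simp add: rotation_stabilizer_def)
qed

lemma card_orbit_mult_card_rotation_stabilizer_le:
  assumes "length y = n" "n > 0"
  shows "card ((\<lambda>r. rotate r y) ` {..<n}) * card (rotation_stabilizer y) \<le> n"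
proof -
  define Orb where "Orb = (\<lambda>r. rotate r y) ` {..<n}"
  have stab_le: "card (rotation_stabilizer y) \<le> card {r \<in> {..<n}. rotate r y = z}" if "z \<in> Orb" for z
  proof -
    obtain r0 where r0: "r0 < n" "z = rotate r0 y" using \<open>z \<in> Orb\<close> unfolding Orb_def by auto
    have "inj_on (\<lambda>t. (r0 + t) mod n) (rotation_stabilizer y)"
    proof (rule inj_onI)
      fix t t' assume "t \<in> rotation_stabilizer y" "t' \<in> rotation_stabilizer y"
        and "(r0 + t) mod n = (r0 + t') mod n"
      moreover from this(3) have "t mod n = t' mod n"
        by (simp add: cong_def[symmetric] cong_add_lcancel_nat)
      ultimately show "t = t'" using assms by (simp add: rotation_stabilizer_def)
    qed
    moreover have "(\<lambda>t. (r0 + t) mod n) ` rotation_stabilizer y \<subseteq> {r \<in> {..<n}. rotate r y = z}"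
    proof (rule image_subsetI)
      fix t assume t: "t \<in> rotation_stabilizer y"
      have "rotate ((r0 + t) mod n) y = rotate r0 (rotate t y)"
        using assms(1) rotate_conv_mod[of "r0 + t" y] by (simp add: rotate_rotate)
      thus "(r0 + t) mod n \<in> {r \<in> {..<n}. rotate r y = z}"
        using t r0 assms by (simp add: rotation_stabilizer_def)
    qed
    ultimately show ?thesis by (intro card_inj_on_le) auto
  qed
  have "card Orb * card (rotation_stabilizer y) = (\<Sum>z\<in>Orb. card (rotation_stabilizer y))"
    by simp
  also have "\<dots> \<le> (\<Sum>z\<in>Orb. card {r \<in> {..<n}. rotate r y = z})"
    using stab_le by (rule sum_mono)
  also have "\<dots> = n"
    unfolding Orb_def using sum.image_gen[of "{..<n}" "\<lambda>_. 1::nat" "\<lambda>r. rotate r y"] by simp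
  finally show ?thesis by (simp add: Orb_def)
qed

lemma sum_card_rotation_stabilizer_conjugates_le:
  assumes "length y = n" "n > 0"
    and conj: "\<And>x. x \<in> S \<Longrightarrow> length x = n \<and> (\<exists>j. y = rotate j x)"
  shows "(\<Sum>x\<in>S. card (rotation_stabilizer x)) \<le> n"
proof -
  define Orb where "Orb = (\<lambda>r. rotate r y) ` {..<n}"
  have in_orbit: "x \<in> Orb \<and> rotation_stabilizer x = rotation_stabilizer y" if x: "x \<in> S" for x
  proof -
    obtain j where lx: "length x = n" and y: "y = rotate j x" using conj[OF x] by blast
    have "x = rotate (n - j mod n) y" using rotate_rotate_inverse[of x j] lx y by simp
    also have "\<dots> = rotate ((n - j mod n) mod n) y"
      using assms(1) rotate_conv_mod[of "n - j mod n" y] by simp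
    finally have "x \<in> Orb" using assms(2) by (simp add: Orb_def)
    thus ?thesis by (simp add: y rotation_stabilizer_rotate)
  qed
  hence "(\<Sum>x\<in>S. card (rotation_stabilizer x)) = card S * card (rotation_stabilizer y)" by simp
  also have "\<dots> \<le> card Orb * card (rotation_stabilizer y)"
    using in_orbit by (intro mult_right_mono card_mono) (auto simp: Orb_def)
  also have "\<dots> \<le> n" using card_orbit_mult_card_rotation_stabilizer_le[OF assms(1,2)] by (simp add: Orb_def)
  finally show ?thesis .
qed


section \<open>Burnside's count of the stabiliser sum\<close>

lemma card_rotate_fixed_words_ge:
  assumes "n > 0"
  shows "k ^ gcd r n \<le> card {x \<in> words k n. rotate r x = x}"
proof -
  define g where "g = gcd r n"
  have gn: "g dvd n" and gr: "g dvd r" and "g > 0" "g \<le> n"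
    using assms by (auto simp: g_def dvd_imp_le)
  define periodic where "periodic = (\<lambda>y::nat list. map (\<lambda>i. y ! (i mod g)) [0..<n])"
  have "inj_on periodic (words k g)"
  proof (rule inj_onI)
    fix a b assume "a \<in> words k g" "b \<in> words k g" and e: "periodic a = periodic b"
    moreover have "a ! i = b ! i" if "i < g" for i
      using arg_cong[OF e, of "\<lambda>z. z ! i"] that \<open>g \<le> n\<close> by (simp add: periodic_def)
    ultimately show "a = b" by (auto simp: words_def intro: nth_equalityI)
  qed
  moreover have "periodic ` words k g \<subseteq> {x \<in> words k n. rotate r x = x}"
  proof (rule image_subsetI)
    fix y assume y: "y \<in> words k g"
    have "y ! (i mod g) \<in> set y" for i
      using y \<open>g > 0\<close> by (simp add: words_def)
    hence "set (periodic y) \<subseteq> {..<k}" using y by (auto simp: periodic_def words_def)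
    moreover have "rotate r (periodic y) = periodic y"
    proof (rule nth_equalityI)
      fix i assume "i < length (rotate r (periodic y))"
      hence i: "i < n" by (simp add: periodic_def)
      have "((r + i) mod n) mod g = (r + i) mod g" using gn by (simp add: mod_mod_cancel)
      also have "\<dots> = i mod g" using gr by (simp add: mod_add_left_eq[symmetric])
      finally have "((r + i) mod n) mod g = i mod g" .
      thus "rotate r (periodic y) ! i = periodic y ! i"
        using i assms by (simp add: nth_rotate periodic_def)
    qed simp
    ultimately show "periodic y \<in> {x \<in> words k n. rotate r x = x}"
      by (simp add: words_def periodic_def)
  qed
  ultimately have "card (words k g) \<le> card {x \<in> words k n. rotate r x = x}"
    using finite_words by (intro card_inj_on_le) auto
  thus ?thesis by (simp add: card_words g_def)
qed

lemma sum_pow_gcd_eq_sum_totient: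
  fixes k n :: nat
  assumes "n > 0"
  shows "(\<Sum>r<n. k ^ gcd r n) = (\<Sum>d | d dvd n. totient d * k ^ (n div d))"
proof -
  have "(\<Sum>r<n. k ^ gcd r n) = (\<Sum>r\<in>{0<..n}. k ^ gcd r n)"
    by (rule sum.reindex_bij_witness[of _ "\<lambda>r. if r = n then 0 else r" "\<lambda>r. if r = 0 then n else r"])
       (use assms in auto)
  also have "\<dots> = (\<Sum>g | g dvd n. \<Sum>r\<in>{r\<in>{0<..n}. gcd r n = g}. k ^ gcd r n)"
    by (rule sum.group[symmetric]) (use assms in auto)
  also have "\<dots> = (\<Sum>g | g dvd n. totient (n div g) * k ^ g)"
  proof (rule sum.cong[OF refl])
    fix g assume "g \<in> {g. g dvd n}"
    hence "card {r\<in>{0<..n}. gcd r n = g} = totient (n div g)"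
      using assms card_gcd_eq_totient by auto
    moreover have "(\<Sum>r\<in>{r\<in>{0<..n}. gcd r n = g}. k ^ gcd r n) = (\<Sum>r\<in>{r\<in>{0<..n}. gcd r n = g}. k ^ g)"
      by (rule sum.cong) auto
    ultimately show "(\<Sum>r\<in>{r\<in>{0<..n}. gcd r n = g}. k ^ gcd r n) = totient (n div g) * k ^ g"
      by simp
  qed
  also have "\<dots> = (\<Sum>d | d dvd n. totient d * k ^ (n div d))"
    using assms by (intro sum.reindex_bij_witness[of _ "(div) n" "(div) n"]) auto
  finally show ?thesis .
qed

lemma sum_card_rotation_stabilizer_eq:
  "(\<Sum>x\<in>words k n. card (rotation_stabilizer x)) = (\<Sum>r<n. card {x \<in> words k n. rotate r x = x})"
proof -
  have "(\<Sum>x\<in>words k n. card (rotation_stabilizer x))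
      = (\<Sum>x\<in>words k n. \<Sum>r\<in>{r\<in>{..<n}. rotate r x = x}. 1::nat)"
    by (intro sum.cong refl) (auto simp: rotation_stabilizer_def words_def)
  also have "\<dots> = (\<Sum>r\<in>{..<n}. \<Sum>x\<in>{x\<in>words k n. rotate r x = x}. 1::nat)"
    using finite_words by (rule sum.swap_restrict) simp
  finally show ?thesis by simp
qed

lemma sum_totient_le_sum_card_rotation_stabilizer:
  assumes "n > 0"
  shows "(\<Sum>d | d dvd n. totient d * k ^ (n div d)) \<le> (\<Sum>x\<in>words k n. card (rotation_stabilizer x))"
  unfolding sum_card_rotation_stabilizer_eq sum_pow_gcd_eq_sum_totient[OF assms, symmetric]
  using card_rotate_fixed_words_ge[OF assms] by (intro sum_mono)

lemma of_nat_mult_C: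
  assumes "n > 0"
  shows "real n * C n k = real (\<Sum>d | d dvd n. totient d * k ^ (n div d))"
  using assms by (simp add: C_def sum_distrib_left)


section \<open>Squares in a word\<close>

definition square_at :: "'a list \<Rightarrow> nat \<Rightarrow> nat \<Rightarrow> bool" where
  "square_at w n i \<longleftrightarrow> i + 2 * n \<le> length w \<and> (\<forall>t<n. w ! (i + t) = w ! (i + n + t))"

definition square_root :: "'a list \<Rightarrow> nat \<Rightarrow> nat \<Rightarrow> 'a list" where
  "square_root w n i = take n (drop i w)"

definition square_positions :: "'a list \<Rightarrow> nat \<Rightarrow> nat set" where
  "square_positions w n = {i. square_at w n i}"

definition run_ends :: "'a list \<Rightarrow> nat \<Rightarrow> nat set" where
  "run_ends w n = {e. square_at w n e \<and> \<not> square_at w n (Suc e)}"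

definition run_end :: "'a list \<Rightarrow> nat \<Rightarrow> nat \<Rightarrow> nat" where
  "run_end w n i = (LEAST j. i \<le> j \<and> \<not> square_at w n (Suc j))"

lemma square_positions_subset:
  assumes "n > 0"
  shows "square_positions w n \<subseteq> {..<length w}"
  using assms by (auto simp: square_positions_def square_at_def)

lemma finite_run_ends:
  assumes "n > 0"
  shows "finite (run_ends w n)"
proof (rule finite_subset)
  show "run_ends w n \<subseteq> {..<length w}"
    using square_positions_subset[OF assms] by (auto simp: run_ends_def square_positions_def)
qed simp

lemma sublist_square_imp_square_at:
  assumes "length x = n" "sublist (x @ x) w"
  shows "\<exists>i. square_at w n i \<and> square_root w n i = x"
proof -
  obtain ps ss where w: "w = ps @ (x @ x) @ ss" using assms(2) by (auto simp: sublist_def)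
  have "square_at w n (length ps)" using assms(1) by (auto simp: square_at_def w nth_append)
  moreover have "square_root w n (length ps) = x" using assms(1) by (simp add: square_root_def w)
  ultimately show ?thesis by blast
qed

text \<open>The only equation of the square at \<open>e + 1\<close> not inherited from the square at \<open>e\<close> is supplied
  by the square at \<open>e'\<close>.\<close>

lemma square_at_Suc_if_close:
  assumes "square_at w n e" "square_at w n e'" "e < e'" "e' \<le> e + n"
  shows "square_at w n (Suc e)"
  unfolding square_at_def
proof (intro conjI allI impI)
  show "Suc e + 2 * n \<le> length w" using assms(2,3) by (simp add: square_at_def)
  fix t assume t: "t < n"
  show "w ! (Suc e + t) = w ! (Suc e + n + t)"
  proof (cases "Suc t < n")
    case True
    thus ?thesis using assms(1) unfolding square_at_def by (metis add_Suc_right add_Suc_shift)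
  next
    case False
    hence "t = n - 1" "e + n - e' < n" using t assms(3) by auto
    hence "w ! (e' + (e + n - e')) = w ! (e' + n + (e + n - e'))"
      using assms(2) by (simp add: square_at_def)
    moreover have "e' + (e + n - e') = Suc e + t" "e' + n + (e + n - e') = Suc e + n + t"
      using \<open>t = n - 1\<close> assms(3,4) t by auto
    ultimately show ?thesis by simp
  qed
qed

lemma run_ends_gap:
  assumes "e \<in> run_ends w n" "square_at w n e'" "e < e'"
  shows "e + n < e'"
proof (rule ccontr)
  assume "\<not> e + n < e'"
  with assms square_at_Suc_if_close[of w n e e'] show False by (simp add: run_ends_def)
qed

lemma square_root_Suc:
  assumes "square_at w n i" "square_at w n (Suc i)" "n > 0"
  shows "square_root w n (Suc i) = rotate1 (square_root w n i)"
proof (rule nth_equalityI)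
  have l: "length (square_root w n i) = n" "length (square_root w n (Suc i)) = n"
    using assms by (auto simp: square_at_def square_root_def)
  thus "length (square_root w n (Suc i)) = length (rotate1 (square_root w n i))" by simp
  fix t assume "t < length (square_root w n (Suc i))"
  hence t: "t < n" using l by simp
  have "square_root w n i ! (Suc t mod n) = w ! (Suc i + t)"
  proof (cases "Suc t < n")
    case True thus ?thesis using assms(1) by (simp add: square_root_def square_at_def)
  next
    case False
    hence "Suc t = n" using t by simp
    hence "square_root w n i ! (Suc t mod n) = w ! i"
      using assms(1,3) by (simp add: square_root_def square_at_def)
    also have "\<dots> = w ! (i + n)" using assms(1,3) unfolding square_at_def by (metis add_0_right)
    also have "i + n = Suc i + t" using \<open>Suc t = n\<close> by simp
    finally show ?thesis .
  qed
  thus "square_root w n (Suc i) ! t = rotate1 (square_root w n i) ! t"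
    using t l assms(2) by (simp add: nth_rotate1 square_root_def square_at_def)
qed

lemma square_root_add:
  assumes "\<And>j. i \<le> j \<Longrightarrow> j \<le> i + d \<Longrightarrow> square_at w n j" "n > 0"
  shows "square_root w n (i + d) = rotate d (square_root w n i)"
  using assms(1)
proof (induction d)
  case (Suc d)
  hence "square_root w n (i + d) = rotate d (square_root w n i)" by simp
  moreover have "square_at w n (i + d)" "square_at w n (Suc (i + d))" using Suc.prems by auto
  ultimately show ?case using square_root_Suc[of w n "i + d"] assms(2) by (simp add: rotate1_rotate_swap)
qed simp

lemma run_end_ge_and_not_square_at_Suc:
  "i \<le> run_end w n i \<and> \<not> square_at w n (Suc (run_end w n i))"
proof -
  have "\<exists>j. i \<le> j \<and> \<not> square_at w n (Suc j)"
    by (rule exI[of _ "i + length w"]) (auto simp: square_at_def)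
  thus ?thesis unfolding run_end_def by (rule LeastI_ex)
qed

lemma square_at_upto_run_end:
  assumes "square_at w n i" "i \<le> j" "j \<le> run_end w n i"
  shows "square_at w n j"
proof -
  have "square_at w n (i + d)" if "i + d \<le> run_end w n i" for d
    using that
  proof (induction d)
    case (Suc d)
    hence "\<not> (i \<le> i + d \<and> \<not> square_at w n (Suc (i + d)))"
      unfolding run_end_def by (intro not_less_Least) simp
    thus ?case by simp
  qed (use assms(1) in simp)
  from this[of "j - i"] assms(2,3) show ?thesis by simp
qed

lemma run_end_mem_run_ends: "square_at w n i \<Longrightarrow> run_end w n i \<in> run_ends w n"
  using square_at_upto_run_end[of w n i "run_end w n i"]
    run_end_ge_and_not_square_at_Suc[of i w n]
  by (simp add: run_ends_def)

lemma square_root_run_end: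
  assumes "square_at w n i" "n > 0"
  shows "square_root w n (run_end w n i) = rotate (run_end w n i - i) (square_root w n i)"
  using square_root_add[of i "run_end w n i - i" w n] square_at_upto_run_end[OF assms(1)]
    run_end_ge_and_not_square_at_Suc[of i w n] assms(2)
  by simp


text \<open>The intervals \<open>{e+1..e+n}\<close> after the run ends are pairwise disjoint and contain no square
  position.\<close>

lemma card_square_positions_add_le_length:
  assumes "n > 0"
  shows "card (square_positions w n) + n * card (run_ends w n) \<le> length w"
proof -
  define Q where "Q = square_positions w n"
  define E where "E = run_ends w n"
  define G where "G = (\<lambda>e. {Suc e..e + n})"
  have finQ: "finite Q" and finE: "finite E"
    using assms square_positions_subset finite_run_ends unfolding Q_def E_def
    by (auto intro: finite_subset)
  have "Q \<inter> (\<Union>e\<in>E. G e) = {}"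
  proof (rule equals0I)
    fix i assume "i \<in> Q \<inter> (\<Union>e\<in>E. G e)"
    then obtain e where "e \<in> run_ends w n" "square_at w n i" "e < i" "i \<le> e + n"
      by (auto simp: Q_def E_def G_def square_positions_def)
    with run_ends_gap[of e w n i] show False by simp
  qed
  hence "card (Q \<union> (\<Union>e\<in>E. G e)) = card Q + card (\<Union>e\<in>E. G e)"
    using finQ finE by (intro card_Un_disjoint) (auto simp: G_def)
  also have "card (\<Union>e\<in>E. G e) = (\<Sum>e\<in>E. card (G e))"
  proof (intro card_UN_disjoint finE ballI impI)
    fix e e' assume "e \<in> E" "e' \<in> E" "e \<noteq> e'"
    hence "e + n < e' \<or> e' + n < e"
      using run_ends_gap[of e w n e'] run_ends_gap[of e' w n e]
      by (cases "e < e'") (auto simp: E_def run_ends_def)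
    thus "G e \<inter> G e' = {}" by (auto simp: G_def)
  qed (simp add: G_def)
  also have "(\<Sum>e\<in>E. card (G e)) = n * card E" by (simp add: G_def)
  finally have "card (Q \<union> (\<Union>e\<in>E. G e)) = card Q + n * card E" .
  moreover have "Q \<union> (\<Union>e\<in>E. G e) \<subseteq> {..<length w}"
    using assms square_positions_subset
    by (auto simp: Q_def G_def E_def run_ends_def square_at_def)
  hence "card (Q \<union> (\<Union>e\<in>E. G e)) \<le> length w"
    using card_mono[of "{..<length w}"] by fastforce
  ultimately show ?thesis by (simp add: Q_def E_def)
qed

lemma card_words_le_card_square_positions:
  assumes "n > 0" "\<forall>x \<in> words k n. sublist (x @ x) w"
  shows "k ^ n \<le> card (square_positions w n)"
proof -
  have fin: "finite (square_positions w n)"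
    using square_positions_subset[OF assms(1)] by (rule finite_subset) simp
  have "words k n \<subseteq> square_root w n ` square_positions w n"
  proof
    fix x assume "x \<in> words k n"
    then obtain i where "square_at w n i" "square_root w n i = x"
      using assms(2) sublist_square_imp_square_at[of x n w] by (auto simp: words_def)
    thus "x \<in> square_root w n ` square_positions w n"
      by (auto simp: square_positions_def)
  qed
  hence "card (words k n) \<le> card (square_root w n ` square_positions w n)"
    using fin by (intro card_mono finite_imageI)
  also have "\<dots> \<le> card (square_positions w n)"
    using fin by (rule card_image_le)
  finally show ?thesis by (simp add: card_words)
qed

text \<open>Group the words by the end of the run containing one of their square occurrences: the words
  of a group are conjugate to the root at that run end.\<close>

lemma sum_card_rotation_stabilizer_le_run_ends:
  assumes "n > 0" "\<forall>x \<in> words k n. sublist (x @ x) w"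
  shows "(\<Sum>x\<in>words k n. card (rotation_stabilizer x)) \<le> n * card (run_ends w n)"
proof -
  have "\<forall>x \<in> words k n. \<exists>i. square_at w n i \<and> square_root w n i = x"
    using assms(2) sublist_square_imp_square_at unfolding words_def by blast
  then obtain occ
    where occ: "\<forall>x \<in> words k n. square_at w n (occ x) \<and> square_root w n (occ x) = x"
    by (rule bchoice[elim_format]) blast
  define grp where "grp = (\<lambda>e. {x \<in> words k n. run_end w n (occ x) = e})"
  have "(\<Sum>x\<in>words k n. card (rotation_stabilizer x))
      = (\<Sum>e\<in>run_ends w n. \<Sum>x\<in>grp e. card (rotation_stabilizer x))"
    unfolding grp_def using finite_words finite_run_ends[OF assms(1)] occ
    by (intro sum.group[symmetric]) (auto intro: run_end_mem_run_ends)
  also have "\<dots> \<le> (\<Sum>e\<in>run_ends w n. n)"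
  proof (rule sum_mono)
    fix e assume "e \<in> run_ends w n"
    hence "length (square_root w n e) = n"
      by (auto simp: run_ends_def square_at_def square_root_def)
    moreover have "length x = n \<and> (\<exists>j. square_root w n e = rotate j x)" if "x \<in> grp e" for x
    proof -
      have x: "x \<in> words k n" "run_end w n (occ x) = e" using that by (auto simp: grp_def)
      with occ square_root_run_end[of w n "occ x"] assms(1) show ?thesis
        by (auto simp: words_def)
    qed
    ultimately show "(\<Sum>x\<in>grp e. card (rotation_stabilizer x)) \<le> n"
      using assms(1) by (intro sum_card_rotation_stabilizer_conjugates_le) auto
  qed
  finally show ?thesis by (simp add: mult.commute)
qed


theorem proposition5:
  fixes k n :: nat and w :: "nat list"
  assumes "k \<ge> 2" and "n \<ge> 1"
    and "set w \<subseteq> {..<k}"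
    and "\<forall>x \<in> words k n. sublist (x @ x) w"
  shows "real (length w) \<ge> real k ^ n + real n * C n k
       \<and> real k ^ n + real n * C n k \<ge> 2 * real k ^ n"
proof -
  have n: "n > 0" using assms(2) by simp
  define T where "T = (\<Sum>d | d dvd n. totient d * k ^ (n div d))"
  have "T \<le> n * card (run_ends w n)"
    using sum_totient_le_sum_card_rotation_stabilizer[OF n, of k]
      sum_card_rotation_stabilizer_le_run_ends[OF n assms(4)] by (simp add: T_def)
  hence "k ^ n + T \<le> length w"
    using card_square_positions_add_le_length[OF n, of w]
      card_words_le_card_square_positions[OF n assms(4)] by linarith
  moreover have "k ^ n \<le> T"
    using member_le_sum[of 1 "{d. d dvd n}" "\<lambda>d. totient d * k ^ (n div d)"] n by (simp add: T_def)
  ultimately have "real (k ^ n + T) \<le> real (length w)" "real (k ^ n) \<le> real T"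
    by (simp_all only: of_nat_le_iff)
  moreover have "real n * C n k = real T" using of_nat_mult_C[OF n] by (simp add: T_def)
  ultimately show ?thesis by simp
qed

end
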